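(* Let $C$ be a finite non-degenerate projective configuration with lines $l_0,l_1,\dots,l_n$, let $\mathcal{P}_0$ be the set of its points not incident to $l_0$, and let $\mathcal{A}=\{(i,p)\in\{1,\dots,n\}\times\mathcal{P}_0 : p \text{ is incident to } l_i\}$. Let $L=\bigoplus_{k\ge1}L_k$ be the free Lie algebra over $\mathbb{Z}$ on $x_1,\dots,x_n$, graded by degree, $H=L_1$, $S_p=\sum_{j:\,p\prec l_j}x_j$ for $p\in\mathcal{P}_0$ (sum over $j\in\{1,\dots,n\}$), $R_2\subset L_2$ the subgroup spanned by the elements $\bar r(i,p)=[x_i,S_p]$ for $(i,p)\in\mathcal{A}$ with $i\neq\min\{j: l_j\succ p\}$ (these elements form a $\mathbb{Z}$-basis of $R_2$), $R_3=[H,R_2]\subset L_3$ and $P_3=L_3/R_3$. Let $A=H^{\mathcal{A}}$ (all maps $\mathcal{A}\to H$) and define $\tilde\tau:A\to\mathrm{Hom}(R_2,P_3)$ on the basis of $R_2$ by $$\tilde\tau a(\bar r(i,p))=[[x_i,a(i,p)],S_p]+\Big[x_i,\sum_{j:\,p\prec l_j}[x_j,a(j,p)]\Big]+R_3 .$$ Let $U\subseteq A$ be the subgroup generated by the following elements: $a^{(0)}_{i,p}$ for $(i,p)\in\mathcal{A}$, given by $a^{(0)}_{i,p}(j,q)=\delta_{i,j}\delta_{p,q}x_i$; $a^{(1)}_{i,p}$ for $i\in\{1,\dots,n\}$, $p\in\mathcal{P}_0$, given by $a^{(1)}_{i,p}(j,q)=\delta_{p,q}x_i$; and $a^{(2)}_{i,p_1,p_2}$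 for $i\in\{1,\dots,n\}$ and $p_1,p_2\in\mathcal{P}_0$ both incident to $l_i$ (not necessarily distinct), given by $a^{(2)}_{i,p_1,p_2}(j,q)=\delta_{i,j}\delta_{p_1,q}S_{p_2}$. Then $U\subseteq\ker\tilde\tau$.
   Context: A projective configuration is a triple $(\mathcal{L},\mathcal{P},\succ)$ of a set of lines $\mathcal{L}$, a set of points $\mathcal{P}$ and an incidence relation $\succ$ between lines and points (written $l\succ p$ or $p\prec l$) such that any two distinct lines are incident to a unique common point, and every point is incident to at least two lines. It is non-degenerate if it has more than one point. $[\cdot,\cdot]$ denotes the Lie bracket in $L$. *)

theory Defs
  imports Main "HOL-Library.Poly_Mapping" "HOL-Library.Function_Algebras"
begin

definition proj_config :: "'l set \<Rightarrow> 'p set \<Rightarrow> ('l \<Rightarrow> 'p \<Rightarrow> bool) \<Rightarrow> bool" where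
  "proj_config Ls Ps inc \<longleftrightarrow>
     (\<forall>l\<in>Ls. \<forall>m\<in>Ls. l \<noteq> m \<longrightarrow> (\<exists>!p. p \<in> Ps \<and> inc l p \<and> inc m p)) \<and>
     (\<forall>p\<in>Ps. \<exists>l\<in>Ls. \<exists>m\<in>Ls. l \<noteq> m \<and> inc l p \<and> inc m p)"

definition non_degenerate :: "'p set \<Rightarrow> bool" where
  "non_degenerate Ps \<longleftrightarrow> (\<exists>p\<in>Ps. \<exists>q\<in>Ps. p \<noteq> q)"

inductive_set zspan :: "'a::ab_group_add set \<Rightarrow> 'a set" for G where
  zspan_zero: "0 \<in> zspan G"
| zspan_gen: "x \<in> G \<Longrightarrow> x \<in> zspan G"
| zspan_add: "x \<in> zspan G \<Longrightarrow> y \<in> zspan G \<Longrightarrow> x + y \<in> zspan G"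
| zspan_neg: "x \<in> zspan G \<Longrightarrow> - x \<in> zspan G"

datatype mag = X nat | Br mag mag

fun leaves :: "mag \<Rightarrow> nat set" where
  "leaves (X i) = {i}"
| "leaves (Br s t) = leaves s \<union> leaves t"

text \<open>Free non-associative ring over Z on the generators in G.\<close>
definition mag_alg :: "nat set \<Rightarrow> (mag \<Rightarrow>\<^sub>0 int) set" where
  "mag_alg G = {f. \<forall>s\<in>Poly_Mapping.keys f. leaves s \<subseteq> G}"

definition gen :: "nat \<Rightarrow> mag \<Rightarrow>\<^sub>0 int" where
  "gen i = Poly_Mapping.single (X i) 1"

definition lbr :: "(mag \<Rightarrow>\<^sub>0 int) \<Rightarrow> (mag \<Rightarrow>\<^sub>0 int) \<Rightarrow> (mag \<Rightarrow>\<^sub>0 int)" where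
  "lbr f g = (\<Sum>s\<in>Poly_Mapping.keys f. \<Sum>t\<in>Poly_Mapping.keys g.
               Poly_Mapping.single (Br s t) (Poly_Mapping.lookup f s * Poly_Mapping.lookup g t))"

text \<open>The two-sided ideal of the free non-associative ring on G generated by
  the Lie ring axioms [a,a] and the Jacobi expressions.  The free Lie ring on G
  is mag_alg G modulo this ideal.\<close>
inductive_set lie_ideal :: "nat set \<Rightarrow> (mag \<Rightarrow>\<^sub>0 int) set" for G where
  li_alt: "a \<in> mag_alg G \<Longrightarrow> lbr a a \<in> lie_ideal G"
| li_jac: "a \<in> mag_alg G \<Longrightarrow> b \<in> mag_alg G \<Longrightarrow> c \<in> mag_alg G \<Longrightarrow>
    lbr a (lbr b c) + lbr b (lbr c a) + lbr c (lbr a b) \<in> lie_ideal G"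
| li_zero: "0 \<in> lie_ideal G"
| li_add: "u \<in> lie_ideal G \<Longrightarrow> v \<in> lie_ideal G \<Longrightarrow> u + v \<in> lie_ideal G"
| li_neg: "u \<in> lie_ideal G \<Longrightarrow> - u \<in> lie_ideal G"
| li_brl: "u \<in> lie_ideal G \<Longrightarrow> a \<in> mag_alg G \<Longrightarrow> lbr a u \<in> lie_ideal G"
| li_brr: "u \<in> lie_ideal G \<Longrightarrow> a \<in> mag_alg G \<Longrightarrow> lbr u a \<in> lie_ideal G"

definition P0 :: "'p set \<Rightarrow> ('l \<Rightarrow> 'p \<Rightarrow> bool) \<Rightarrow> (nat \<Rightarrow> 'l) \<Rightarrow> 'p set" where
  "P0 Ps inc l = {p \<in> Ps. \<not> inc (l 0) p}"

definition Acal :: "nat \<Rightarrow> 'p set \<Rightarrow> ('l \<Rightarrow> 'p \<Rightarrow> bool) \<Rightarrow> (nat \<Rightarrow> 'l) \<Rightarrow> (nat \<times> 'p) set" where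
  "Acal n Ps inc l = {(i, p). i \<in> {1..n} \<and> p \<in> P0 Ps inc l \<and> inc (l i) p}"

definition Sp :: "nat \<Rightarrow> ('l \<Rightarrow> 'p \<Rightarrow> bool) \<Rightarrow> (nat \<Rightarrow> 'l) \<Rightarrow> 'p \<Rightarrow> mag \<Rightarrow>\<^sub>0 int" where
  "Sp n inc l p = (\<Sum>j\<in>{j\<in>{1..n}. inc (l j) p}. gen j)"

definition minline :: "nat \<Rightarrow> ('l \<Rightarrow> 'p \<Rightarrow> bool) \<Rightarrow> (nat \<Rightarrow> 'l) \<Rightarrow> 'p \<Rightarrow> nat" where
  "minline n inc l p = Min {j\<in>{1..n}. inc (l j) p}"

definition Hgrp :: "nat \<Rightarrow> (mag \<Rightarrow>\<^sub>0 int) set" where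
  "Hgrp n = zspan (gen ` {1..n})"

definition R2 :: "nat \<Rightarrow> 'p set \<Rightarrow> ('l \<Rightarrow> 'p \<Rightarrow> bool) \<Rightarrow> (nat \<Rightarrow> 'l) \<Rightarrow> (mag \<Rightarrow>\<^sub>0 int) set" where
  "R2 n Ps inc l = zspan {lbr (gen i) (Sp n inc l p) | i p.
       (i, p) \<in> Acal n Ps inc l \<and> i \<noteq> minline n inc l p}"

definition R3 :: "nat \<Rightarrow> 'p set \<Rightarrow> ('l \<Rightarrow> 'p \<Rightarrow> bool) \<Rightarrow> (nat \<Rightarrow> 'l) \<Rightarrow> (mag \<Rightarrow>\<^sub>0 int) set" where
  "R3 n Ps inc l = zspan {lbr h r | h r. h \<in> Hgrp n \<and> r \<in> R2 n Ps inc l}"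

definition tau_expr :: "nat \<Rightarrow> ('l \<Rightarrow> 'p \<Rightarrow> bool) \<Rightarrow> (nat \<Rightarrow> 'l)
     \<Rightarrow> (nat \<times> 'p \<Rightarrow> mag \<Rightarrow>\<^sub>0 int) \<Rightarrow> nat \<Rightarrow> 'p \<Rightarrow> mag \<Rightarrow>\<^sub>0 int" where
  "tau_expr n inc l a i p =
     lbr (lbr (gen i) (a (i, p))) (Sp n inc l p)
     + lbr (gen i) (\<Sum>j\<in>{j\<in>{1..n}. inc (l j) p}. lbr (gen j) (a (j, p)))"

definition Agrp :: "nat \<Rightarrow> 'p set \<Rightarrow> ('l \<Rightarrow> 'p \<Rightarrow> bool) \<Rightarrow> (nat \<Rightarrow> 'l) \<Rightarrow> (nat \<times> 'p \<Rightarrow> mag \<Rightarrow>\<^sub>0 int) set" where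
  "Agrp n Ps inc l = {a. (\<forall>x\<in>Acal n Ps inc l. a x \<in> Hgrp n) \<and> (\<forall>x. x \<notin> Acal n Ps inc l \<longrightarrow> a x = 0)}"

text \<open>ker tau~: tau~ a vanishes on every basis element r(i,p) of R_2, i.e. the
  class of tau_expr in P_3 = L_3/R_3 is zero, i.e. tau_expr is congruent modulo
  the Lie ideal to an element of (the representatives of) R_3.\<close>
definition ker_tau :: "nat \<Rightarrow> 'p set \<Rightarrow> ('l \<Rightarrow> 'p \<Rightarrow> bool) \<Rightarrow> (nat \<Rightarrow> 'l) \<Rightarrow> (nat \<times> 'p \<Rightarrow> mag \<Rightarrow>\<^sub>0 int) set" where
  "ker_tau n Ps inc l = {a \<in> Agrp n Ps inc l. \<forall>(i, p)\<in>Acal n Ps inc l. i \<noteq> minline n inc l p \<longrightarrow>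
      (\<exists>r\<in>R3 n Ps inc l. tau_expr n inc l a i p - r \<in> lie_ideal {1..n})}"

definition a0 :: "nat \<Rightarrow> 'p set \<Rightarrow> ('l \<Rightarrow> 'p \<Rightarrow> bool) \<Rightarrow> (nat \<Rightarrow> 'l) \<Rightarrow> nat \<Rightarrow> 'p \<Rightarrow> (nat \<times> 'p \<Rightarrow> mag \<Rightarrow>\<^sub>0 int)" where
  "a0 n Ps inc l i p = (\<lambda>(j, q). if (j, q) \<in> Acal n Ps inc l \<and> j = i \<and> q = p then gen i else 0)"

definition a1 :: "nat \<Rightarrow> 'p set \<Rightarrow> ('l \<Rightarrow> 'p \<Rightarrow> bool) \<Rightarrow> (nat \<Rightarrow> 'l) \<Rightarrow> nat \<Rightarrow> 'p \<Rightarrow> (nat \<times> 'p \<Rightarrow> mag \<Rightarrow>\<^sub>0 int)" where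
  "a1 n Ps inc l i p = (\<lambda>(j, q). if (j, q) \<in> Acal n Ps inc l \<and> q = p then gen i else 0)"

definition a2 :: "nat \<Rightarrow> 'p set \<Rightarrow> ('l \<Rightarrow> 'p \<Rightarrow> bool) \<Rightarrow> (nat \<Rightarrow> 'l) \<Rightarrow> nat \<Rightarrow> 'p \<Rightarrow> 'p \<Rightarrow> (nat \<times> 'p \<Rightarrow> mag \<Rightarrow>\<^sub>0 int)" where
  "a2 n Ps inc l i p1 p2 = (\<lambda>(j, q). if (j, q) \<in> Acal n Ps inc l \<and> j = i \<and> q = p1 then Sp n inc l p2 else 0)"

definition Ugrp :: "nat \<Rightarrow> 'p set \<Rightarrow> ('l \<Rightarrow> 'p \<Rightarrow> bool) \<Rightarrow> (nat \<Rightarrow> 'l) \<Rightarrow> (nat \<times> 'p \<Rightarrow> mag \<Rightarrow>\<^sub>0 int) set" where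
  "Ugrp n Ps inc l = zspan (
      {a0 n Ps inc l i p | i p. (i, p) \<in> Acal n Ps inc l}
    \<union> {a1 n Ps inc l i p | i p. i \<in> {1..n} \<and> p \<in> P0 Ps inc l}
    \<union> {a2 n Ps inc l i p1 p2 | i p1 p2. i \<in> {1..n} \<and> p1 \<in> P0 Ps inc l \<and> p2 \<in> P0 Ps inc l
          \<and> inc (l i) p1 \<and> inc (l i) p2})"

end

theory Submission
  imports Defs
begin

text \<open>
  It suffices to check the generators, working modulo the Lie relations and R3 = [H, R2].
  For a0 every term of tau contains the bracket [x_i, x_i]. For a1 the inner sum is [S_p, x_i],
  and the Jacobi identity turns tau into -[x_i, [x_k, S_p]], which lies in [H, R2] because k is
  not the minimal line through p. For a2 both terms of tau are brackets of an element of H with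
  [x_i, S_p2]; this lies in R2 modulo the Lie relations even when i is the minimal line
  through p2, since it then equals [S_p2, S_p2] minus basis elements of R2.
  None of this uses the axioms of a projective configuration.
\<close>

lemma lookup_lbr:
  "Poly_Mapping.lookup (lbr f g) u =
     (case u of X i \<Rightarrow> 0 | Br s t \<Rightarrow> Poly_Mapping.lookup f s * Poly_Mapping.lookup g t)"
proof (cases u)
  case (X i)
  then show ?thesis by (simp add: lbr_def lookup_sum lookup_single)
next
  case (Br s0 t0)
  have "Poly_Mapping.lookup (lbr f g) u =
     (\<Sum>s\<in>Poly_Mapping.keys f. if s = s0 then (\<Sum>t\<in>Poly_Mapping.keys g. if t = t0 then
        Poly_Mapping.lookup f s * Poly_Mapping.lookup g t else 0) else 0)"
    unfolding lbr_def lookup_sum lookup_single Br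
    by (intro sum.cong refl) (auto simp: when_def intro!: sum.neutral)
  also have "\<dots> = Poly_Mapping.lookup f s0 * Poly_Mapping.lookup g t0"
    by (auto simp: in_keys_iff)
  finally show ?thesis using Br by simp
qed

lemma lbr_add_left: "lbr (a + b) c = lbr a c + lbr b c"
  by (rule poly_mapping_eqI) (simp add: lookup_lbr lookup_add algebra_simps split: mag.split)

lemma lbr_add_right: "lbr c (a + b) = lbr c a + lbr c b"
  by (rule poly_mapping_eqI) (simp add: lookup_lbr lookup_add algebra_simps split: mag.split)

lemma lbr_minus_left: "lbr (- a) c = - lbr a c"
  by (rule poly_mapping_eqI) (simp add: lookup_lbr split: mag.split)

lemma lbr_minus_right: "lbr c (- a) = - lbr c a"
  by (rule poly_mapping_eqI) (simp add: lookup_lbr split: mag.split)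

lemma lbr_diff_left: "lbr (a - b) c = lbr a c - lbr b c"
  by (rule poly_mapping_eqI) (simp add: lookup_lbr lookup_minus algebra_simps split: mag.split)

lemma lbr_diff_right: "lbr c (a - b) = lbr c a - lbr c b"
  by (rule poly_mapping_eqI) (simp add: lookup_lbr lookup_minus algebra_simps split: mag.split)

lemma lbr_zero_left [simp]: "lbr 0 c = 0"
  by (rule poly_mapping_eqI) (simp add: lookup_lbr split: mag.split)

lemma lbr_zero_right [simp]: "lbr c 0 = 0"
  by (rule poly_mapping_eqI) (simp add: lookup_lbr split: mag.split)

lemma lbr_sum_left: "lbr (sum f A) c = (\<Sum>x\<in>A. lbr (f x) c)"
  by (rule poly_mapping_eqI) (simp add: lookup_lbr lookup_sum sum_distrib_right split: mag.split)

lemma mag_alg_iff: "f \<in> mag_alg G \<longleftrightarrow> (\<forall>s. Poly_Mapping.lookup f s \<noteq> 0 \<longrightarrow> leaves s \<subseteq> G)"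
  by (auto simp: mag_alg_def in_keys_iff)

lemma mag_alg_lbr:
  assumes "a \<in> mag_alg G" "b \<in> mag_alg G"
  shows "lbr a b \<in> mag_alg G"
  unfolding mag_alg_iff
proof (intro allI impI)
  fix u assume u: "Poly_Mapping.lookup (lbr a b) u \<noteq> 0"
  then obtain s t where "u = Br s t" "Poly_Mapping.lookup a s \<noteq> 0" "Poly_Mapping.lookup b t \<noteq> 0"
    by (cases u) (auto simp: lookup_lbr)
  then show "leaves u \<subseteq> G" using assms by (simp add: mag_alg_iff)
qed

lemma mag_alg_add: "a \<in> mag_alg G \<Longrightarrow> b \<in> mag_alg G \<Longrightarrow> a + b \<in> mag_alg G"
  unfolding mag_alg_iff lookup_add by (metis add.right_neutral add_0)

lemma mag_alg_minus: "a \<in> mag_alg G \<Longrightarrow> - a \<in> mag_alg G"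
  by (simp add: mag_alg_iff)

lemma mag_alg_zero: "0 \<in> mag_alg G"
  by (simp add: mag_alg_iff)

lemma gen_in_mag_alg: "i \<in> G \<Longrightarrow> gen i \<in> mag_alg G"
  by (simp add: mag_alg_iff gen_def lookup_single when_def)

lemma zspan_minimal:
  assumes "G \<subseteq> S" and "0 \<in> S"
    and "\<And>x y. x \<in> S \<Longrightarrow> y \<in> S \<Longrightarrow> x + y \<in> S" and "\<And>x. x \<in> S \<Longrightarrow> - x \<in> S"
  shows "zspan G \<subseteq> S"
proof
  fix x assume "x \<in> zspan G"
  then show "x \<in> S" by induction (use assms in auto)
qed

lemma zspan_sum: "(\<And>x. x \<in> A \<Longrightarrow> f x \<in> zspan G) \<Longrightarrow> sum f A \<in> zspan G"
  by (induction A rule: infinite_finite_induct) (auto intro: zspan.intros)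

lemma lie_ideal_diff: "u \<in> lie_ideal G \<Longrightarrow> v \<in> lie_ideal G \<Longrightarrow> u - v \<in> lie_ideal G"
  using li_add[OF _ li_neg, of u G v] by simp

lemma lie_ideal_anticomm:
  assumes "a \<in> mag_alg G" "b \<in> mag_alg G"
  shows "lbr a b + lbr b a \<in> lie_ideal G"
proof -
  have "lbr (a + b) (a + b) - lbr a a - lbr b b \<in> lie_ideal G"
    using assms by (intro lie_ideal_diff li_alt mag_alg_add)
  moreover have "lbr (a + b) (a + b) - lbr a a - lbr b b = lbr a b + lbr b a"
    by (simp add: lbr_add_left lbr_add_right algebra_simps)
  ultimately show ?thesis by simp
qed

lemma Acal_iff: "(j, p) \<in> Acal n Ps inc l \<longleftrightarrow> j \<in> {1..n} \<and> p \<in> P0 Ps inc l \<and> inc (l j) p"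
  by (simp add: Acal_def)

lemma gen_in_Hgrp: "j \<in> {1..n} \<Longrightarrow> gen j \<in> Hgrp n"
  unfolding Hgrp_def by (rule zspan_gen) simp

lemma Hgrp_zero: "0 \<in> Hgrp n"
  unfolding Hgrp_def by (rule zspan_zero)

lemma Hgrp_add: "x \<in> Hgrp n \<Longrightarrow> y \<in> Hgrp n \<Longrightarrow> x + y \<in> Hgrp n"
  unfolding Hgrp_def by (rule zspan_add)

lemma Hgrp_minus: "x \<in> Hgrp n \<Longrightarrow> - x \<in> Hgrp n"
  unfolding Hgrp_def by (rule zspan_neg)

lemma Sp_in_Hgrp: "Sp n inc l p \<in> Hgrp n"
  unfolding Sp_def Hgrp_def by (rule zspan_sum) (auto intro: zspan_gen)

lemma Hgrp_subset_mag_alg: "Hgrp n \<subseteq> mag_alg {1..n}"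
  unfolding Hgrp_def by (rule zspan_minimal) (auto intro: gen_in_mag_alg mag_alg_zero mag_alg_add mag_alg_minus)

lemma Sp_in_mag_alg: "Sp n inc l p \<in> mag_alg {1..n}"
  using Sp_in_Hgrp Hgrp_subset_mag_alg by (rule subsetD[rotated])

lemma R2_subset_mag_alg: "R2 n Ps inc l \<subseteq> mag_alg {1..n}"
  unfolding R2_def
proof (rule zspan_minimal)
  show "{lbr (gen i) (Sp n inc l p) |i p. (i, p) \<in> Acal n Ps inc l \<and> i \<noteq> minline n inc l p}
      \<subseteq> mag_alg {1..n}"
  proof clarify
    fix i p assume "(i, p) \<in> Acal n Ps inc l"
    then have "gen i \<in> mag_alg {1..n}" by (intro gen_in_mag_alg) (simp add: Acal_iff)
    then show "lbr (gen i) (Sp n inc l p) \<in> mag_alg {1..n}" using Sp_in_mag_alg by (rule mag_alg_lbr)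
  qed
qed (auto intro: mag_alg_zero mag_alg_add mag_alg_minus)

lemma lbr_gen_Sp_in_R2:
  "(i, p) \<in> Acal n Ps inc l \<Longrightarrow> i \<noteq> minline n inc l p \<Longrightarrow> lbr (gen i) (Sp n inc l p) \<in> R2 n Ps inc l"
  unfolding R2_def by (rule zspan_gen) blast

lemma lbr_Hgrp_R2_in_R3: "h \<in> Hgrp n \<Longrightarrow> r \<in> R2 n Ps inc l \<Longrightarrow> lbr h r \<in> R3 n Ps inc l"
  unfolding R3_def by (rule zspan_gen) blast

lemma R3_zero: "0 \<in> R3 n Ps inc l"
  unfolding R3_def by (rule zspan_zero)

lemma R3_add: "x \<in> R3 n Ps inc l \<Longrightarrow> y \<in> R3 n Ps inc l \<Longrightarrow> x + y \<in> R3 n Ps inc l"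
  unfolding R3_def by (rule zspan_add)

lemma R3_minus: "x \<in> R3 n Ps inc l \<Longrightarrow> - x \<in> R3 n Ps inc l"
  unfolding R3_def by (rule zspan_neg)

lemma lbr_gen_Sp_mod_R2:
  assumes ip: "(i, p) \<in> Acal n Ps inc l"
  obtains \<rho> where "\<rho> \<in> R2 n Ps inc l" "lbr (gen i) (Sp n inc l p) - \<rho> \<in> lie_ideal {1..n}"
proof (cases "i = minline n inc l p")
  case False
  then show ?thesis using that lbr_gen_Sp_in_R2[OF ip] li_zero by fastforce
next
  case True
  let ?J = "{j\<in>{1..n}. inc (l j) p}"
  let ?S = "Sp n inc l p"
  define \<rho> where "\<rho> = - (\<Sum>j\<in>?J - {i}. lbr (gen j) ?S)"
  have "\<rho> \<in> R2 n Ps inc l"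
    unfolding \<rho>_def R2_def using ip True
    by (intro zspan_neg zspan_sum, fold R2_def) (auto simp: Acal_iff intro: lbr_gen_Sp_in_R2)
  moreover have "lbr (gen i) ?S - \<rho> = (\<Sum>j\<in>?J. lbr (gen j) ?S)"
  proof -
    have "i \<in> ?J" using ip by (simp add: Acal_iff)
    then have "(\<Sum>j\<in>?J. lbr (gen j) ?S) = lbr (gen i) ?S + (\<Sum>j\<in>?J - {i}. lbr (gen j) ?S)"
      by (intro sum.remove) auto
    then show ?thesis unfolding \<rho>_def by simp
  qed
  moreover have "\<dots> = lbr ?S ?S"
    by (simp only: Sp_def lbr_sum_left)
  ultimately show ?thesis using that li_alt[OF Sp_in_mag_alg] by metis
qed

definition vanishes_in_P3 :: "nat \<Rightarrow> 'p set \<Rightarrow> ('l \<Rightarrow> 'p \<Rightarrow> bool) \<Rightarrow> (nat \<Rightarrow> 'l) \<Rightarrow> (mag \<Rightarrow>\<^sub>0 int) \<Rightarrow> bool"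
  where "vanishes_in_P3 n Ps inc l x \<longleftrightarrow> (\<exists>r\<in>R3 n Ps inc l. x - r \<in> lie_ideal {1..n})"

lemma vanishes_in_P3_R3: "r \<in> R3 n Ps inc l \<Longrightarrow> vanishes_in_P3 n Ps inc l r"
  unfolding vanishes_in_P3_def using li_zero by force

lemma vanishes_in_P3_cong:
  assumes "x - y \<in> lie_ideal {1..n}" and "vanishes_in_P3 n Ps inc l y"
  shows "vanishes_in_P3 n Ps inc l x"
proof -
  from assms(2) obtain r where "r \<in> R3 n Ps inc l" "y - r \<in> lie_ideal {1..n}"
    unfolding vanishes_in_P3_def by blast
  moreover have "x - r = (x - y) + (y - r)" by simp
  ultimately show ?thesis unfolding vanishes_in_P3_def using assms(1) li_add by metis
qed

lemma vanishes_in_P3_lie_ideal: "x \<in> lie_ideal {1..n} \<Longrightarrow> vanishes_in_P3 n Ps inc l x"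
  using vanishes_in_P3_cong[of x 0 n Ps inc l] vanishes_in_P3_R3[OF R3_zero] by (metis diff_zero)

lemma vanishes_in_P3_add:
  assumes "vanishes_in_P3 n Ps inc l x" "vanishes_in_P3 n Ps inc l y"
  shows "vanishes_in_P3 n Ps inc l (x + y)"
proof -
  from assms obtain r s where "r \<in> R3 n Ps inc l" "x - r \<in> lie_ideal {1..n}"
    "s \<in> R3 n Ps inc l" "y - s \<in> lie_ideal {1..n}"
    unfolding vanishes_in_P3_def by blast
  moreover have "x + y - (r + s) = (x - r) + (y - s)" by simp
  ultimately show ?thesis unfolding vanishes_in_P3_def by (metis R3_add li_add)
qed

lemma vanishes_in_P3_minus:
  assumes "vanishes_in_P3 n Ps inc l x"
  shows "vanishes_in_P3 n Ps inc l (- x)"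
proof -
  from assms obtain r where "r \<in> R3 n Ps inc l" "x - r \<in> lie_ideal {1..n}"
    unfolding vanishes_in_P3_def by blast
  moreover have "- x - (- r) = - (x - r)" by simp
  ultimately show ?thesis unfolding vanishes_in_P3_def by (metis R3_minus li_neg)
qed

lemma vanishes_in_P3_lbr_Hgrp_left:
  assumes h: "h \<in> Hgrp n" and \<rho>: "\<rho> \<in> R2 n Ps inc l" and x: "x - \<rho> \<in> lie_ideal {1..n}"
  shows "vanishes_in_P3 n Ps inc l (lbr h x)"
proof (rule vanishes_in_P3_cong)
  show "lbr h x - lbr h \<rho> \<in> lie_ideal {1..n}"
    using li_brl[OF x] h Hgrp_subset_mag_alg by (auto simp: lbr_diff_right)
  show "vanishes_in_P3 n Ps inc l (lbr h \<rho>)"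
    by (intro vanishes_in_P3_R3 lbr_Hgrp_R2_in_R3 h \<rho>)
qed

lemma vanishes_in_P3_lbr_Hgrp_right:
  assumes h: "h \<in> Hgrp n" and \<rho>: "\<rho> \<in> R2 n Ps inc l" and x: "x - \<rho> \<in> lie_ideal {1..n}"
  shows "vanishes_in_P3 n Ps inc l (lbr x h)"
proof (rule vanishes_in_P3_cong)
  have "h \<in> mag_alg {1..n}" "\<rho> \<in> mag_alg {1..n}"
    using h \<rho> Hgrp_subset_mag_alg R2_subset_mag_alg by blast+
  then have "lbr (x - \<rho>) h + (lbr \<rho> h + lbr h \<rho>) \<in> lie_ideal {1..n}"
    by (intro li_add li_brr[OF x] lie_ideal_anticomm)
  then show "lbr x h - - lbr h \<rho> \<in> lie_ideal {1..n}"
    by (simp add: lbr_diff_left)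
  show "vanishes_in_P3 n Ps inc l (- lbr h \<rho>)"
    by (intro vanishes_in_P3_minus vanishes_in_P3_R3 lbr_Hgrp_R2_in_R3 h \<rho>)
qed

lemma tau_expr_add: "tau_expr n inc l (a + b) i p = tau_expr n inc l a i p + tau_expr n inc l b i p"
  by (simp add: tau_expr_def lbr_add_left lbr_add_right sum.distrib)

lemma tau_expr_minus: "tau_expr n inc l (- a) i p = - tau_expr n inc l a i p"
  by (simp add: tau_expr_def lbr_minus_left lbr_minus_right sum_negf)

lemma tau_expr_column:
  assumes "(k, p) \<in> Acal n Ps inc l" and "\<And>j. j \<in> {1..n} \<Longrightarrow> inc (l j) p \<Longrightarrow> a (j, p) = f j"
  shows "tau_expr n inc l a k p = lbr (lbr (gen k) (f k)) (Sp n inc l p)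
      + lbr (gen k) (\<Sum>j\<in>{j\<in>{1..n}. inc (l j) p}. lbr (gen j) (f j))"
proof -
  have "(\<Sum>j\<in>{j\<in>{1..n}. inc (l j) p}. lbr (gen j) (a (j, p)))
      = (\<Sum>j\<in>{j\<in>{1..n}. inc (l j) p}. lbr (gen j) (f j))"
    by (rule sum.cong) (simp_all add: assms(2))
  moreover have "a (k, p) = f k" using assms by (simp add: Acal_iff)
  ultimately show ?thesis by (simp add: tau_expr_def)
qed

lemma tau_expr_zero_column:
  assumes "(k, p) \<in> Acal n Ps inc l" and "\<And>j. j \<in> {1..n} \<Longrightarrow> inc (l j) p \<Longrightarrow> a (j, p) = 0"
  shows "tau_expr n inc l a k p = 0"
  using tau_expr_column[of k p n Ps inc l a "\<lambda>_. 0"] assms by simp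

lemma Agrp_zero: "0 \<in> Agrp n Ps inc l"
  by (simp add: Agrp_def Hgrp_zero)

lemma Agrp_add: "a \<in> Agrp n Ps inc l \<Longrightarrow> b \<in> Agrp n Ps inc l \<Longrightarrow> a + b \<in> Agrp n Ps inc l"
  by (simp add: Agrp_def Hgrp_add)

lemma Agrp_minus: "a \<in> Agrp n Ps inc l \<Longrightarrow> - a \<in> Agrp n Ps inc l"
  by (simp add: Agrp_def Hgrp_minus)

lemma ker_tau_iff:
  "a \<in> ker_tau n Ps inc l \<longleftrightarrow> a \<in> Agrp n Ps inc l \<and>
     (\<forall>(k, p)\<in>Acal n Ps inc l. k \<noteq> minline n inc l p \<longrightarrow> vanishes_in_P3 n Ps inc l (tau_expr n inc l a k p))"
  unfolding ker_tau_def vanishes_in_P3_def by blast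

lemma ker_tauI:
  assumes "a \<in> Agrp n Ps inc l"
    and "\<And>k p. (k, p) \<in> Acal n Ps inc l \<Longrightarrow> k \<noteq> minline n inc l p \<Longrightarrow>
       vanishes_in_P3 n Ps inc l (tau_expr n inc l a k p)"
  shows "a \<in> ker_tau n Ps inc l"
  using assms unfolding ker_tau_iff by blast

lemma ker_tau_subset_Agrp: "ker_tau n Ps inc l \<subseteq> Agrp n Ps inc l"
  unfolding ker_tau_def by blast

lemma ker_tauD:
  "a \<in> ker_tau n Ps inc l \<Longrightarrow> (k, p) \<in> Acal n Ps inc l \<Longrightarrow> k \<noteq> minline n inc l p \<Longrightarrow>
     vanishes_in_P3 n Ps inc l (tau_expr n inc l a k p)"
  unfolding ker_tau_iff by blast

lemma ker_tau_zero: "0 \<in> ker_tau n Ps inc l"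
  by (rule ker_tauI[OF Agrp_zero]) (simp add: tau_expr_def vanishes_in_P3_R3 R3_zero)

lemma ker_tau_add:
  assumes "a \<in> ker_tau n Ps inc l" "b \<in> ker_tau n Ps inc l"
  shows "a + b \<in> ker_tau n Ps inc l"
  using assms ker_tau_subset_Agrp[of n Ps inc l]
  by (intro ker_tauI Agrp_add) (auto simp: tau_expr_add intro: vanishes_in_P3_add ker_tauD)

lemma ker_tau_minus:
  assumes "a \<in> ker_tau n Ps inc l"
  shows "- a \<in> ker_tau n Ps inc l"
  using assms ker_tau_subset_Agrp[of n Ps inc l]
  by (intro ker_tauI Agrp_minus) (auto simp: tau_expr_minus intro: vanishes_in_P3_minus ker_tauD)

lemma a0_in_ker_tau:
  assumes iq: "(i, q) \<in> Acal n Ps inc l"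
  shows "a0 n Ps inc l i q \<in> ker_tau n Ps inc l"
proof (rule ker_tauI)
  have i: "i \<in> {1..n}" using iq by (simp add: Acal_iff)
  then show "a0 n Ps inc l i q \<in> Agrp n Ps inc l"
    by (auto simp: Agrp_def a0_def Hgrp_zero gen_in_Hgrp)
  fix k p assume kp: "(k, p) \<in> Acal n Ps inc l"
  show "vanishes_in_P3 n Ps inc l (tau_expr n inc l (a0 n Ps inc l i q) k p)"
  proof (cases "p = q")
    case False
    with kp have "tau_expr n inc l (a0 n Ps inc l i q) k p = 0"
      by (intro tau_expr_zero_column) (auto simp: a0_def)
    then show ?thesis by (simp add: vanishes_in_P3_R3 R3_zero)
  next
    case True
    define f where "f j = (if j = i then gen i else 0)" for j
    have tau: "tau_expr n inc l (a0 n Ps inc l i q) k p = lbr (lbr (gen k) (f k)) (Sp n inc l p)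
        + lbr (gen k) (\<Sum>j\<in>{j\<in>{1..n}. inc (l j) p}. lbr (gen j) (f j))"
      using kp True by (intro tau_expr_column) (auto simp: a0_def f_def Acal_iff)
    have "(\<Sum>j\<in>{j\<in>{1..n}. inc (l j) p}. lbr (gen j) (f j))
        = (\<Sum>j\<in>{j\<in>{1..n}. inc (l j) p}. if j = i then lbr (gen i) (gen i) else 0)"
      by (rule sum.cong) (simp_all add: f_def)
    also have "\<dots> = lbr (gen i) (gen i)"
      using iq True by (simp add: Acal_iff)
    finally have sum: "(\<Sum>j\<in>{j\<in>{1..n}. inc (l j) p}. lbr (gen j) (f j)) = lbr (gen i) (gen i)" .
    have ii: "lbr (gen i) (gen i) \<in> lie_ideal {1..n}"
      using i by (intro li_alt gen_in_mag_alg)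
    then have kk: "lbr (gen k) (f k) \<in> lie_ideal {1..n}"
      by (cases "k = i") (simp_all add: f_def li_zero)
    have xk: "gen k \<in> mag_alg {1..n}"
      using kp by (intro gen_in_mag_alg) (simp add: Acal_iff)
    have "tau_expr n inc l (a0 n Ps inc l i q) k p \<in> lie_ideal {1..n}"
      unfolding tau sum by (rule li_add[OF li_brr[OF kk Sp_in_mag_alg] li_brl[OF ii xk]])
    then show ?thesis by (rule vanishes_in_P3_lie_ideal)
  qed
qed

lemma a1_in_ker_tau:
  assumes i: "i \<in> {1..n}"
  shows "a1 n Ps inc l i q \<in> ker_tau n Ps inc l"
proof (rule ker_tauI)
  show "a1 n Ps inc l i q \<in> Agrp n Ps inc l"
    using i by (auto simp: Agrp_def a1_def Hgrp_zero gen_in_Hgrp)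
  fix k p assume kp: "(k, p) \<in> Acal n Ps inc l" and km: "k \<noteq> minline n inc l p"
  show "vanishes_in_P3 n Ps inc l (tau_expr n inc l (a1 n Ps inc l i q) k p)"
  proof (cases "p = q")
    case False
    with kp have "tau_expr n inc l (a1 n Ps inc l i q) k p = 0"
      by (intro tau_expr_zero_column) (auto simp: a1_def)
    then show ?thesis by (simp add: vanishes_in_P3_R3 R3_zero)
  next
    case True
    let ?S = "Sp n inc l p"
    let ?xi = "gen i" and ?xk = "gen k"
    let ?\<tau> = "tau_expr n inc l (a1 n Ps inc l i q) k p"
    have "?\<tau> = lbr (lbr ?xk ?xi) ?S + lbr ?xk (\<Sum>j\<in>{j\<in>{1..n}. inc (l j) p}. lbr (gen j) ?xi)"
      using kp True by (intro tau_expr_column) (auto simp: a1_def Acal_iff)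
    also have "\<dots> = lbr (lbr ?xk ?xi) ?S + lbr ?xk (lbr ?S ?xi)"
      by (simp only: Sp_def lbr_sum_left)
    finally have tau: "?\<tau> = lbr (lbr ?xk ?xi) ?S + lbr ?xk (lbr ?S ?xi)" .
    have xk: "?xk \<in> mag_alg {1..n}" using kp by (intro gen_in_mag_alg) (simp add: Acal_iff)
    have xi: "?xi \<in> mag_alg {1..n}" using i by (rule gen_in_mag_alg)
    have "?\<tau> - - lbr ?xi (lbr ?xk ?S)
        = (lbr ?xk (lbr ?S ?xi) + lbr ?S (lbr ?xi ?xk) + lbr ?xi (lbr ?xk ?S))
          + (lbr (lbr ?xk ?xi) ?S + lbr ?S (lbr ?xk ?xi))
          - lbr ?S (lbr ?xk ?xi + lbr ?xi ?xk)"
      unfolding tau by (simp add: lbr_add_right algebra_simps)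
    also have "\<dots> \<in> lie_ideal {1..n}"
      using xk xi Sp_in_mag_alg
      by (intro lie_ideal_diff li_add li_jac lie_ideal_anticomm li_brl mag_alg_lbr)
    finally have "?\<tau> - - lbr ?xi (lbr ?xk ?S) \<in> lie_ideal {1..n}" .
    moreover have "vanishes_in_P3 n Ps inc l (- lbr ?xi (lbr ?xk ?S))"
      using i kp km
      by (intro vanishes_in_P3_minus vanishes_in_P3_R3 lbr_Hgrp_R2_in_R3 gen_in_Hgrp lbr_gen_Sp_in_R2)
    ultimately show ?thesis by (rule vanishes_in_P3_cong)
  qed
qed

lemma a2_in_ker_tau:
  assumes ip1: "inc (l i) p1" and ip2: "(i, p2) \<in> Acal n Ps inc l"
  shows "a2 n Ps inc l i p1 p2 \<in> ker_tau n Ps inc l"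
proof (rule ker_tauI)
  show "a2 n Ps inc l i p1 p2 \<in> Agrp n Ps inc l"
    by (auto simp: Agrp_def a2_def Hgrp_zero Sp_in_Hgrp)
  fix k p assume kp: "(k, p) \<in> Acal n Ps inc l"
  show "vanishes_in_P3 n Ps inc l (tau_expr n inc l (a2 n Ps inc l i p1 p2) k p)"
  proof (cases "p = p1")
    case False
    with kp have "tau_expr n inc l (a2 n Ps inc l i p1 p2) k p = 0"
      by (intro tau_expr_zero_column) (auto simp: a2_def)
    then show ?thesis by (simp add: vanishes_in_P3_R3 R3_zero)
  next
    case True
    let ?S2 = "Sp n inc l p2"
    define f where "f j = (if j = i then ?S2 else 0)" for j
    obtain \<rho> where \<rho>: "\<rho> \<in> R2 n Ps inc l" and mod: "lbr (gen i) ?S2 - \<rho> \<in> lie_ideal {1..n}"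
      using ip2 by (rule lbr_gen_Sp_mod_R2)
    have tau: "tau_expr n inc l (a2 n Ps inc l i p1 p2) k p = lbr (lbr (gen k) (f k)) (Sp n inc l p)
        + lbr (gen k) (\<Sum>j\<in>{j\<in>{1..n}. inc (l j) p}. lbr (gen j) (f j))"
      using kp True by (intro tau_expr_column) (auto simp: a2_def f_def Acal_iff)
    have "(\<Sum>j\<in>{j\<in>{1..n}. inc (l j) p}. lbr (gen j) (f j))
        = (\<Sum>j\<in>{j\<in>{1..n}. inc (l j) p}. if j = i then lbr (gen i) ?S2 else 0)"
      by (rule sum.cong) (simp_all add: f_def)
    also have "\<dots> = lbr (gen i) ?S2"
      using ip1 ip2 True by (simp add: Acal_iff)
    finally have sum: "(\<Sum>j\<in>{j\<in>{1..n}. inc (l j) p}. lbr (gen j) (f j)) = lbr (gen i) ?S2" .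
    have "vanishes_in_P3 n Ps inc l (lbr (lbr (gen k) (f k)) (Sp n inc l p))"
      using vanishes_in_P3_lbr_Hgrp_right[OF Sp_in_Hgrp \<rho> mod]
      by (cases "k = i") (simp_all add: f_def vanishes_in_P3_R3 R3_zero)
    moreover have "vanishes_in_P3 n Ps inc l (lbr (gen k) (lbr (gen i) ?S2))"
      using kp by (intro vanishes_in_P3_lbr_Hgrp_left[OF _ \<rho> mod] gen_in_Hgrp) (simp add: Acal_iff)
    ultimately show ?thesis unfolding tau sum by (rule vanishes_in_P3_add)
  qed
qed

theorem proposition2p4:
  fixes Ls :: "'l set" and Ps :: "'p set" and inc :: "'l \<Rightarrow> 'p \<Rightarrow> bool"
    and n :: nat and l :: "nat \<Rightarrow> 'l"
  assumes "proj_config Ls Ps inc"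
    and "finite Ls" and "finite Ps"
    and "non_degenerate Ps"
    and "bij_betw l {0..n} Ls"
  shows "Ugrp n Ps inc l \<subseteq> ker_tau n Ps inc l"
  unfolding Ugrp_def
  by (rule zspan_minimal[OF _ ker_tau_zero ker_tau_add ker_tau_minus])
    (auto simp: Acal_iff intro: a0_in_ker_tau a1_in_ker_tau a2_in_ker_tau)

end
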